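(* Let $q\in\mathrm{prob}(\{0,1\}^2)$. The set $C:=\{(\pi_1,\chi^{(2)}_{1|1}-\chi^{(1)}_{1|1}):(\pi,\chi)\in\Theta_2,\ \mu(\pi,\chi)=q\}$ is nonempty and equals the set of all $(\mathrm{Pr},\Delta\mathrm{Se})\in[0,1]\times[-1,1]$ satisfying $\max\{-q_{10},\ q_{01}-q_{10}+\mathrm{Pr}-1\}\le\mathrm{Pr}\,\Delta\mathrm{Se}\le\min\{q_{01},\ q_{01}-q_{10}+1-\mathrm{Pr}\}$.
   Context: $\mathrm{prob}(\mathcal{X})$ is the set of probability densities on a finite set $\mathcal{X}$; $\mathrm{markov}(\mathcal{X},\mathcal{Y})$ the set of maps $(x,y)\mapsto p_{y|x}$ with $p_{\cdot|x}\in\mathrm{prob}(\mathcal{Y})$. $\Theta_2:=\mathrm{prob}(\{0,1\})\times\mathrm{markov}(\{0,1\},\{0,1\}^2)$, $\mu(\pi,\chi)_j:=\sum_{i=0}^1\pi_i\chi_{j|i}$ for $j\in\{0,1\}^2$, $\chi^{(1)}_{\iota|i}:=\chi_{\iota0|i}+\chi_{\iota1|i}$, $\chi^{(2)}_{\iota|i}:=\chi_{0\iota|i}+\chi_{1\iota|i}$. *)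

theory Defs
  imports Complex_Main
begin

text \<open>The set {0,1} is rendered as bool (0 = False, 1 = True); {0,1}^2 as bool \<times> bool.\<close>

definition prob_dens :: "('a::finite \<Rightarrow> real) \<Rightarrow> bool" where
  "prob_dens p \<longleftrightarrow> (\<forall>x. 0 \<le> p x) \<and> (\<Sum>x\<in>UNIV. p x) = 1"

definition markov :: "('a::finite \<Rightarrow> 'b::finite \<Rightarrow> real) \<Rightarrow> bool" where
  "markov chi \<longleftrightarrow> (\<forall>x. prob_dens (chi x))"

definition Theta2 :: "((bool \<Rightarrow> real) \<times> (bool \<Rightarrow> bool \<times> bool \<Rightarrow> real)) set" where
  "Theta2 = {(\<pi>, chi). prob_dens \<pi> \<and> markov chi}"

definition mu :: "(bool \<Rightarrow> real) \<Rightarrow> (bool \<Rightarrow> bool \<times> bool \<Rightarrow> real) \<Rightarrow> bool \<times> bool \<Rightarrow> real" where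
  "mu \<pi> chi j = (\<Sum>i\<in>UNIV. \<pi> i * chi i j)"

definition chi1 :: "(bool \<Rightarrow> bool \<times> bool \<Rightarrow> real) \<Rightarrow> bool \<Rightarrow> bool \<Rightarrow> real" where
  "chi1 chi i \<iota> = chi i (\<iota>, False) + chi i (\<iota>, True)"

definition chi2 :: "(bool \<Rightarrow> bool \<times> bool \<Rightarrow> real) \<Rightarrow> bool \<Rightarrow> bool \<Rightarrow> real" where
  "chi2 chi i \<iota> = chi i (False, \<iota>) + chi i (True, \<iota>)"

end

theory Submission
  imports Defs
begin

text \<open>Let \<open>r j = \<pi>\<^sub>1 \<chi>\<^sub>j\<^sub>|\<^sub>1\<close> be the part of \<open>q\<close> contributed by class 1. Then \<open>0 \<le> r \<le> q\<close>, the mass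
  of \<open>r\<close> is \<open>Pr\<close>, and \<open>Pr \<Delta>Se = r\<^sub>0\<^sub>1 - r\<^sub>1\<^sub>0\<close>. Conversely, if \<open>Pr > 0\<close> every such \<open>r\<close> comes from
  the parameter \<open>\<chi>\<^sub>\<cdot>\<^sub>|\<^sub>1 = r / Pr\<close>, \<open>\<chi>\<^sub>\<cdot>\<^sub>|\<^sub>0 = (q - r) / (1 - Pr)\<close>. The stated inequalities are
  exactly the conditions under which some \<open>0 \<le> r \<le> q\<close> of mass \<open>Pr\<close> has \<open>r\<^sub>0\<^sub>1 - r\<^sub>1\<^sub>0 = Pr \<Delta>Se\<close>.
  If \<open>Pr = 0\<close>, class 1 does not show up in \<open>q\<close> at all and \<open>\<Delta>Se\<close> is unconstrained.\<close>

definition identified_set :: "(bool \<times> bool \<Rightarrow> real) \<Rightarrow> (real \<times> real) set" where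
  "identified_set q = {(\<pi> True, chi2 chi True True - chi1 chi True True) | \<pi> chi.
                         (\<pi>, chi) \<in> Theta2 \<and> mu \<pi> chi = q}"

definition sharp_bounds :: "(bool \<times> bool \<Rightarrow> real) \<Rightarrow> (real \<times> real) set" where
  "sharp_bounds q = {(Pr, dSe). Pr \<in> {0..1} \<and> dSe \<in> {-1..1} \<and>
     max (- q (True, False)) (q (False, True) - q (True, False) + Pr - 1) \<le> Pr * dSe \<and>
     Pr * dSe \<le> min (q (False, True)) (q (False, True) - q (True, False) + 1 - Pr)}"

lemma sum_UNIV_bool: "(\<Sum>x\<in>UNIV. f x) = f False + f True"
  by (simp add: UNIV_bool add.commute)

lemma sum_UNIV_bool_prod:
  "(\<Sum>x\<in>UNIV. f x) = f (False, False) + f (False, True) + f (True, False) + f (True, True)"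
proof -
  have UNIV_eq: "(UNIV :: (bool \<times> bool) set) = {(False, False), (False, True), (True, False), (True, True)}"
    by (auto simp: UNIV_bool)
  show ?thesis by (subst UNIV_eq) (simp add: algebra_simps)
qed

lemma prob_dens_bool_iff:
  "prob_dens (p :: bool \<Rightarrow> real) \<longleftrightarrow> 0 \<le> p False \<and> 0 \<le> p True \<and> p False + p True = 1"
  unfolding prob_dens_def sum_UNIV_bool by (metis (full_types))

lemma prob_dens_bool_prod_iff:
  "prob_dens (p :: bool \<times> bool \<Rightarrow> real) \<longleftrightarrow>
     0 \<le> p (False, False) \<and> 0 \<le> p (False, True) \<and> 0 \<le> p (True, False) \<and> 0 \<le> p (True, True) \<and>
     p (False, False) + p (False, True) + p (True, False) + p (True, True) = 1"
  unfolding prob_dens_def sum_UNIV_bool_prod by (metis (full_types) surj_pair)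

lemma prob_dens_le_one:
  assumes "prob_dens p"
  shows "0 \<le> p x \<and> p x \<le> 1"
  using assms member_le_sum[of x UNIV p] unfolding prob_dens_def by auto

lemma mu_eq_iff: "mu \<pi> chi = q \<longleftrightarrow> (\<forall>j. q j = \<pi> False * chi False j + \<pi> True * chi True j)"
  unfolding mu_def sum_UNIV_bool by auto

lemma delta_Se_eq: "chi2 chi i True - chi1 chi i True = chi i (False, True) - chi i (True, False)"
  unfolding chi1_def chi2_def by simp

lemma delta_Se_bounds:
  assumes "markov chi"
  shows "chi2 chi i True - chi1 chi i True \<in> {-1..1}"
  using assms prob_dens_le_one unfolding delta_Se_eq markov_def by (smt (verit) atLeastAtMost_iff)

lemma Theta2_weight_nonneg:
  assumes "(\<pi>, chi) \<in> Theta2"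
  shows "0 \<le> \<pi> i * chi i j"
  using assms prob_dens_le_one[of \<pi>] prob_dens_le_one[of "chi i"]
  unfolding Theta2_def markov_def by auto

lemma prob_dens_mu:
  assumes "(\<pi>, chi) \<in> Theta2"
  shows "prob_dens (mu \<pi> chi)"
proof -
  have "(\<Sum>j\<in>UNIV. mu \<pi> chi j) = (\<Sum>i\<in>UNIV. \<Sum>j\<in>UNIV. \<pi> i * chi i j)"
    unfolding mu_def by (rule sum.swap)
  also have "\<dots> = (\<Sum>i\<in>UNIV. \<pi> i * (\<Sum>j\<in>UNIV. chi i j))"
    by (simp add: sum_distrib_left)
  also have "\<dots> = 1" using assms unfolding Theta2_def markov_def prob_dens_def by simp
  finally show ?thesis
    using Theta2_weight_nonneg[OF assms] unfolding prob_dens_def mu_def by (simp add: sum_nonneg)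
qed

lemma mixture_component_bounds:
  assumes "(\<pi>, chi) \<in> Theta2" and "mu \<pi> chi = q"
  shows "0 \<le> \<pi> True * chi True j \<and> \<pi> True * chi True j \<le> q j"
proof -
  have "0 \<le> \<pi> i * chi i j" for i using Theta2_weight_nonneg[OF assms(1)] .
  then show ?thesis using assms(2) unfolding mu_eq_iff by (smt (verit))
qed

lemma mixture_component_mass:
  assumes "(\<pi>, chi) \<in> Theta2"
  shows "(\<Sum>j\<in>UNIV. \<pi> True * chi True j) = \<pi> True"
  using assms unfolding Theta2_def markov_def prob_dens_def by (simp add: sum_distrib_left[symmetric])

lemma sub_density_difference_bounds:
  fixes q r :: "bool \<times> bool \<Rightarrow> real"
  assumes "\<And>j. 0 \<le> r j \<and> r j \<le> q j" and "sum r UNIV = P" and "sum q UNIV = 1"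
  defines "D \<equiv> r (False, True) - r (True, False)"
  shows "max (- q (True, False)) (q (False, True) - q (True, False) + P - 1) \<le> D \<and>
         D \<le> min (q (False, True)) (q (False, True) - q (True, False) + 1 - P)"
  using assms(1)[of "(False, False)"] assms(1)[of "(False, True)"]
    assms(1)[of "(True, False)"] assms(1)[of "(True, True)"] assms(2,3)
  unfolding D_def sum_UNIV_bool_prod by auto

lemma sub_density_with_difference_exists:
  fixes q :: "bool \<times> bool \<Rightarrow> real"
  assumes q: "prob_dens q" and "\<bar>D\<bar> \<le> P"
    and lo: "max (- q (True, False)) (q (False, True) - q (True, False) + P - 1) \<le> D"
    and hi: "D \<le> min (q (False, True)) (q (False, True) - q (True, False) + 1 - P)"
  shows "\<exists>r. (\<forall>j. 0 \<le> r j \<and> r j \<le> q j) \<and> sum r UNIV = P \<and> r (False, True) - r (True, False) = D"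
proof -
  \<comment> \<open>\<open>T\<close> is the least admissible mass on the cells \<open>01, 10\<close>: at least \<open>\<bar>D\<bar>\<close>, and enough that
    the rest \<open>R\<close> fits into the diagonal cells \<open>00, 11\<close>.\<close>
  define T where "T = max \<bar>D\<bar> (P - q (False, False) - q (True, True))"
  define R where "R = P - T"
  define r :: "bool \<times> bool \<Rightarrow> real" where
    "r = (\<lambda>j. if j = (False, True) then (T + D) / 2 else if j = (True, False) then (T - D) / 2
             else if j = (False, False) then min (q (False, False)) R else R - min (q (False, False)) R)"
  have "0 \<le> r j \<and> r j \<le> q j" for j
    using q \<open>\<bar>D\<bar> \<le> P\<close> lo hi unfolding prob_dens_bool_prod_iff r_def R_def T_def
    by (cases j; auto split: if_splits; smt (verit))
  moreover have "sum r UNIV = P"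
    unfolding sum_UNIV_bool_prod r_def R_def by (simp add: field_simps)
  moreover have "r (False, True) - r (True, False) = D"
    unfolding r_def by (simp add: field_simps)
  ultimately show ?thesis by blast
qed

lemma mixture_of_sub_density:
  fixes q r :: "bool \<times> bool \<Rightarrow> real"
  assumes q: "prob_dens q" and r: "\<And>j. 0 \<le> r j \<and> r j \<le> q j" and mass: "sum r UNIV = P"
    and "0 < P" and "P \<le> 1"
  shows "\<exists>\<pi> chi. (\<pi>, chi) \<in> Theta2 \<and> mu \<pi> chi = q \<and> \<pi> True = P \<and> chi True = (\<lambda>j. r j / P)"
proof -
  define \<pi> :: "bool \<Rightarrow> real" where "\<pi> = (\<lambda>i. if i then P else 1 - P)"
  \<comment> \<open>For \<open>P = 1\<close> class 0 carries no weight and any density, here \<open>q\<close>, will do.\<close>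
  define chi :: "bool \<Rightarrow> bool \<times> bool \<Rightarrow> real" where
    "chi = (\<lambda>i j. if i then r j / P else if P < 1 then (q j - r j) / (1 - P) else q j)"
  have q_sum: "sum q UNIV = 1" using q unfolding prob_dens_def by simp
  have "prob_dens (chi True)"
    using r mass \<open>0 < P\<close> unfolding prob_dens_def chi_def by (simp add: sum_divide_distrib[symmetric])
  moreover have "prob_dens (chi False)"
  proof (cases "P < 1")
    case True
    have "sum (\<lambda>j. q j - r j) UNIV = 1 - P" using q_sum mass by (simp add: sum_subtractf)
    then show ?thesis
      using True r unfolding prob_dens_def chi_def by (simp add: sum_divide_distrib[symmetric])
  qed (use q in \<open>simp add: chi_def\<close>)
  moreover have "prob_dens \<pi>" using \<open>0 < P\<close> \<open>P \<le> 1\<close> unfolding prob_dens_bool_iff \<pi>_def by simp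
  ultimately have "(\<pi>, chi) \<in> Theta2" unfolding Theta2_def markov_def by (simp add: all_bool_eq)
  moreover have "mu \<pi> chi = q"
    unfolding mu_eq_iff
  proof
    fix j
    show "q j = \<pi> False * chi False j + \<pi> True * chi True j"
    proof (cases "P < 1")
      case False
      then have "P = 1" using \<open>P \<le> 1\<close> by simp
      then have "r j = q j"
        using sum_mono_inv[of r UNIV q j] r mass q_sum by simp
      then show ?thesis using \<open>P = 1\<close> unfolding \<pi>_def chi_def by simp
    qed (use \<open>0 < P\<close> in \<open>simp add: \<pi>_def chi_def\<close>)
  qed
  moreover have "\<pi> True = P" "chi True = (\<lambda>j. r j / P)" unfolding \<pi>_def chi_def by simp_all
  ultimately show ?thesis by blast
qed

lemma mixture_with_null_class:
  assumes q: "prob_dens q" and "S \<in> {-1..1}"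
  shows "\<exists>\<pi> chi. (\<pi>, chi) \<in> Theta2 \<and> mu \<pi> chi = q \<and> \<pi> True = 0 \<and>
                 chi2 chi True True - chi1 chi True True = S"
proof -
  define c :: "bool \<times> bool \<Rightarrow> real" where
    "c = (\<lambda>j. if j = (False, True) then (1 + S) / 2 else if j = (True, False) then (1 - S) / 2 else 0)"
  define \<pi> :: "bool \<Rightarrow> real" where "\<pi> = (\<lambda>i. if i then 0 else 1)"
  define chi where "chi = (\<lambda>i. if i then c else q)"
  have "prob_dens c"
    using \<open>S \<in> {-1..1}\<close> unfolding prob_dens_bool_prod_iff c_def
    by (auto simp: add_divide_distrib[symmetric])
  then have "(\<pi>, chi) \<in> Theta2"
    using q unfolding Theta2_def markov_def prob_dens_bool_iff \<pi>_def chi_def by simp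
  moreover have "mu \<pi> chi = q" unfolding mu_eq_iff \<pi>_def chi_def by simp
  moreover have "chi2 chi True True - chi1 chi True True = S"
    unfolding delta_Se_eq chi_def c_def by (simp add: field_simps)
  moreover have "\<pi> True = 0" unfolding \<pi>_def by simp
  ultimately show ?thesis by blast
qed

lemma identified_setI:
  assumes "(\<pi>, chi) \<in> Theta2" and "mu \<pi> chi = q"
  shows "(\<pi> True, chi2 chi True True - chi1 chi True True) \<in> identified_set q"
  using assms unfolding identified_set_def by blast

lemma identified_set_subset_sharp_bounds: "identified_set q \<subseteq> sharp_bounds q"
proof
  fix x assume "x \<in> identified_set q"
  then obtain \<pi> chi where x: "x = (\<pi> True, chi2 chi True True - chi1 chi True True)"
    and \<theta>: "(\<pi>, chi) \<in> Theta2" and q: "mu \<pi> chi = q" unfolding identified_set_def by auto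
  define r where "r j = \<pi> True * chi True j" for j
  have "r (False, True) - r (True, False) = \<pi> True * (chi2 chi True True - chi1 chi True True)"
    unfolding r_def delta_Se_eq by (simp add: algebra_simps)
  moreover have "sum q UNIV = 1" using prob_dens_mu[OF \<theta>] q unfolding prob_dens_def by simp
  ultimately have "max (- q (True, False)) (q (False, True) - q (True, False) + \<pi> True - 1)
                     \<le> \<pi> True * (chi2 chi True True - chi1 chi True True) \<and>
                   \<pi> True * (chi2 chi True True - chi1 chi True True)
                     \<le> min (q (False, True)) (q (False, True) - q (True, False) + 1 - \<pi> True)"
    using sub_density_difference_bounds[of r q "\<pi> True"] mixture_component_bounds[OF \<theta> q]
      mixture_component_mass[OF \<theta>] unfolding r_def by simp
  moreover have "\<pi> True \<in> {0..1}" using \<theta> prob_dens_le_one unfolding Theta2_def by auto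
  moreover have "chi2 chi True True - chi1 chi True True \<in> {-1..1}"
    using \<theta> delta_Se_bounds unfolding Theta2_def by auto
  ultimately show "x \<in> sharp_bounds q" unfolding x sharp_bounds_def by simp
qed

lemma sharp_bounds_subset_identified_set:
  assumes q: "prob_dens q"
  shows "sharp_bounds q \<subseteq> identified_set q"
proof
  fix x assume "x \<in> sharp_bounds q"
  then obtain P S where x: "x = (P, S)" and P: "P \<in> {0..1}" and S: "S \<in> {-1..1}"
    and bounds: "max (- q (True, False)) (q (False, True) - q (True, False) + P - 1) \<le> P * S"
                "P * S \<le> min (q (False, True)) (q (False, True) - q (True, False) + 1 - P)"
    unfolding sharp_bounds_def by auto
  show "x \<in> identified_set q"
  proof (cases "P = 0")
    case True
    then show ?thesis
      using mixture_with_null_class[OF q S] identified_setI unfolding x by metis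
  next
    case False
    then have "0 < P" using P by simp
    have "\<bar>P * S\<bar> \<le> P" using P S by (auto simp: abs_mult intro!: mult_left_le)
    then obtain r where r: "\<And>j. 0 \<le> r j \<and> r j \<le> q j" and "sum r UNIV = P"
      and diff: "r (False, True) - r (True, False) = P * S"
      using sub_density_with_difference_exists[OF q _ bounds] by blast
    then obtain \<pi> chi where \<theta>: "(\<pi>, chi) \<in> Theta2" "mu \<pi> chi = q"
      and "\<pi> True = P" and chi: "chi True = (\<lambda>j. r j / P)"
      using mixture_of_sub_density[OF q r \<open>sum r UNIV = P\<close> \<open>0 < P\<close>] P by auto
    have "chi2 chi True True - chi1 chi True True = S"
      using diff \<open>0 < P\<close> unfolding delta_Se_eq chi by (simp add: diff_divide_distrib[symmetric])
    then show ?thesis using identified_setI[OF \<theta>] \<open>\<pi> True = P\<close> unfolding x by simp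
  qed
qed

theorem lemma5:
  fixes q :: "bool \<times> bool \<Rightarrow> real"
  assumes "prob_dens q"
  defines "C \<equiv> {(\<pi> True, chi2 chi True True - chi1 chi True True) | \<pi> chi.
                   (\<pi>, chi) \<in> Theta2 \<and> mu \<pi> chi = q}"
  shows "C \<noteq> {} \<and>
    C = {(Pr, dSe). Pr \<in> {0..1} \<and> dSe \<in> {-1..1} \<and>
          max (- q (True, False)) (q (False, True) - q (True, False) + Pr - 1) \<le> Pr * dSe \<and>
          Pr * dSe \<le> min (q (False, True)) (q (False, True) - q (True, False) + 1 - Pr)}"
proof -
  have "C = sharp_bounds q"
    unfolding C_def identified_set_def[symmetric]
    using identified_set_subset_sharp_bounds sharp_bounds_subset_identified_set[OF assms(1)] by blast
  moreover have "(0, 0) \<in> sharp_bounds q"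
    using assms(1) unfolding prob_dens_bool_prod_iff sharp_bounds_def by auto
  ultimately show ?thesis unfolding sharp_bounds_def by blast
qed

end
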